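(* Let $\gamma:\pi\to\pi'$ be an arrow of some Rauzy class on the alphabet $\mathcal{A}$. Then $Q_{\pi'}(u)=Q_\pi(u\overline{B}_\gamma)$ for every $u\in(\mathbb{Z}/2\mathbb{Z})^{\mathcal{A}}$.
   Context: Permutations $\pi=(\pi_{\mathrm t},\pi_{\mathrm b})$ are pairs of bijections $\mathcal{A}\to\{1,\dots,d\}$, $d\ge3$, irreducible and nondegenerate; $\alpha_{\varepsilon,j}=\pi_\varepsilon^{-1}(j)$. Rauzy induction: the top operation, with $\alpha_{\mathrm b,k}=\alpha_{\mathrm t,d}$, replaces the bottom row by $\alpha_{\mathrm b,1},\dots,\alpha_{\mathrm b,k},\alpha_{\mathrm b,d},\alpha_{\mathrm b,k+1},\dots,\alpha_{\mathrm b,d-1}$ (winner $\alpha_{\mathrm t,d}$, loser $\alpha_{\mathrm b,d}$); the bottom operation, with $\alpha_{\mathrm t,k}=\alpha_{\mathrm b,d}$, replaces the top row by $\alpha_{\mathrm t,1},\dots,\alpha_{\mathrm t,k},\alpha_{\mathrm t,d},\alpha_{\mathrm t,k+1},\dots,\alpha_{\mathrm t,d-1}$ (winner $\alpha_{\mathrm b,d}$, loser $\alpha_{\mathrm t,d}$). An arrow $\gamma:\pi\to\pi'$ is one such operation, and $B_\gamma=\mathrm{Id}+E_{\alpha_{\mathrm l}\alpha_{\mathrm w}}$ with $\alpha_{\mathrm w},\alpha_{\mathrm l}$ its winner and loser. $(\Omega_\pi)_{\alpha\beta}=+1$ if $\pi_{\mathrm t}(\alpha)<\pi_{\mathrm t}(\beta)$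 and $\pi_{\mathrm b}(\alpha)>\pi_{\mathrm b}(\beta)$, $-1$ if the reverse inequalities hold, $0$ otherwise. A bar denotes reduction mod 2. $Q_\pi(u)=\sum_{\pi_{\mathrm t}(\alpha)<\pi_{\mathrm t}(\beta)}u_\alpha(\Omega_\pi)_{\alpha\beta}u_\beta+\sum_\alpha u_\alpha\bmod 2$ for $u\in(\mathbb{Z}/2\mathbb{Z})^{\mathcal{A}}$; vectors act on matrices from the left (row vectors). *)

theory Defs
  imports Main "HOL-Library.Numeral_Type"
begin

text \<open>A permutation pi = (pi_t, pi_b) on the finite alphabet 'a: two bijections onto {1..d}, d = CARD('a).\<close>
type_synonym 'a perm2 = "('a \<Rightarrow> nat) \<times> ('a \<Rightarrow> nat)"

definition is_perm2 :: "'a::finite perm2 \<Rightarrow> bool" where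
  "is_perm2 p \<longleftrightarrow> bij_betw (fst p) UNIV {1..CARD('a)} \<and> bij_betw (snd p) UNIV {1..CARD('a)}"

definition irreducible2 :: "'a::finite perm2 \<Rightarrow> bool" where
  "irreducible2 p \<longleftrightarrow> (\<forall>k. 1 \<le> k \<and> k < CARD('a) \<longrightarrow>
      {a. fst p a \<le> k} \<noteq> {a. snd p a \<le> k})"

definition letter :: "('a \<Rightarrow> nat) \<Rightarrow> nat \<Rightarrow> 'a" where
  "letter f j = (THE a. f a = j)"

text \<open>Insert the letter at position d right after position k, shifting k+1..d-1 by one.\<close>
definition rauzy_row :: "nat \<Rightarrow> nat \<Rightarrow> ('a \<Rightarrow> nat) \<Rightarrow> 'a \<Rightarrow> nat" where
  "rauzy_row d k f b = (if f b \<le> k then f b else if f b = d then k + 1 else f b + 1)"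

definition rauzy_top :: "'a::finite perm2 \<Rightarrow> 'a perm2" where
  "rauzy_top p = (fst p,
     rauzy_row CARD('a) (snd p (letter (fst p) CARD('a))) (snd p))"

definition rauzy_bot :: "'a::finite perm2 \<Rightarrow> 'a perm2" where
  "rauzy_bot p = (rauzy_row CARD('a) (fst p (letter (snd p) CARD('a))) (fst p), snd p)"

definition rauzy_arrow :: "'a::finite perm2 \<Rightarrow> 'a perm2 \<Rightarrow> 'a \<Rightarrow> 'a \<Rightarrow> bool" where
  "rauzy_arrow p p' w l \<longleftrightarrow>
     (p' = rauzy_top p \<and> w = letter (fst p) CARD('a) \<and> l = letter (snd p) CARD('a)) \<or>
     (p' = rauzy_bot p \<and> w = letter (snd p) CARD('a) \<and> l = letter (fst p) CARD('a))"

definition Bmat :: "'a \<Rightarrow> 'a \<Rightarrow> 'a \<Rightarrow> 'a \<Rightarrow> int" where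
  "Bmat w l a b = (if a = b then 1 else 0) + (if a = l \<and> b = w then 1 else 0)"

definition mod2_mat :: "('a \<Rightarrow> 'a \<Rightarrow> int) \<Rightarrow> 'a \<Rightarrow> 'a \<Rightarrow> 2" where
  "mod2_mat M a b = of_int (M a b)"

definition vecmat :: "('a::finite \<Rightarrow> 2) \<Rightarrow> ('a \<Rightarrow> 'a \<Rightarrow> 2) \<Rightarrow> 'a \<Rightarrow> 2" where
  "vecmat u M b = (\<Sum>a\<in>UNIV. u a * M a b)"

definition Omega :: "'a perm2 \<Rightarrow> 'a \<Rightarrow> 'a \<Rightarrow> int" where
  "Omega p a b = (if fst p a < fst p b \<and> snd p a > snd p b then 1
                  else if fst p a > fst p b \<and> snd p a < snd p b then -1 else 0)"

definition Qform :: "'a::finite perm2 \<Rightarrow> ('a \<Rightarrow> 2) \<Rightarrow> 2" where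
  "Qform p u = (\<Sum>(a, b)\<in>{(a, b). fst p a < fst p b}. u a * of_int (Omega p a b) * u b)
               + (\<Sum>a\<in>UNIV. u a)"

end

theory Submission
  imports Defs
begin

text \<open>
  Mod 2, \<open>Q(u)\<close> is the sum of \<open>u a u b\<close> over the crossing pairs (a before b in one row,
  after b in the other) plus \<open>\<Sum>\<^sub>a u a\<close>. An arrow changes only the row in which the loser l
  is last, moving l to just behind the winner w there; so exactly the pairs \<open>{l, x}\<close> with x
  behind w change their crossing status, and Q changes by \<open>u l \<Sum>\<^sub>x u x\<close> over these x.
  On the other side, \<open>u B\<close> adds \<open>u l\<close> to the coordinate of w, which is last in the other
  row; w crosses exactly the letters behind it, which gives the same sum plus the term
  \<open>x = l\<close>, and that term cancels against the new linear term \<open>u l\<close>.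
\<close>

lemma bit_cases: "(x::2) = 0 \<or> x = 1"
proof (cases x)
  case (of_int z)
  then have "z < 2" by simp
  then have "z = 0 \<or> z = 1" using of_int by arith
  then show ?thesis using of_int by auto
qed

lemma bit_add_self [simp]: "(x::2) + x = 0"
  using bit_cases[of x] by auto

lemma bit_mult_self [simp]: "(x::2) * x = x"
  using bit_cases[of x] by auto

lemma bit_two_eq_zero [simp]: "(2::2) = 0"
  using bit_add_self[of 1] by simp

definition crossing_form :: "('a::finite \<Rightarrow> nat) \<Rightarrow> ('a \<Rightarrow> nat) \<Rightarrow> ('a \<Rightarrow> 2) \<Rightarrow> 2" where
  "crossing_form T G u =
     (\<Sum>a\<in>UNIV. \<Sum>b\<in>UNIV. of_bool (T a < T b \<and> G b < G a) * u a * u b) + (\<Sum>a\<in>UNIV. u a)"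

lemma Qform_eq_crossing_form: "Qform p u = crossing_form (fst p) (snd p) u"
proof -
  have "(\<Sum>a\<in>UNIV. \<Sum>b\<in>UNIV. of_bool (fst p a < fst p b \<and> snd p b < snd p a) * u a * u b)
      = (\<Sum>(a, b)\<in>UNIV. (of_bool (fst p a < fst p b \<and> snd p b < snd p a) * u a * u b :: 2))"
    by (simp add: sum.cartesian_product)
  also have "\<dots> = (\<Sum>(a, b)\<in>{(a, b). fst p a < fst p b}. u a * of_int (Omega p a b) * u b)"
    by (rule sum.mono_neutral_cong_right) (auto simp: Omega_def of_bool_def split: if_splits)
  finally show ?thesis unfolding Qform_def crossing_form_def by simp
qed

lemma crossing_form_swap: "crossing_form T G u = crossing_form G T u"
  unfolding crossing_form_def by (subst sum.swap) (simp add: ac_simps conj_commute)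

lemma vecmat_Bmat: "vecmat u (mod2_mat (Bmat w l)) = u(w := u w + u l)"
proof
  fix x
  have "vecmat u (mod2_mat (Bmat w l)) x
      = (\<Sum>a\<in>UNIV. (if a = x then u a else 0) + (if a = l \<and> x = w then u a else 0))"
    unfolding vecmat_def mod2_mat_def Bmat_def by (rule sum.cong) auto
  then show "vecmat u (mod2_mat (Bmat w l)) x = (u(w := u w + u l)) x"
    by (simp add: sum.distrib)
qed

lemma letter_bij_betw:
  assumes "bij_betw T UNIV {1..n}" and "j \<in> {1..n}"
  shows "T (letter T j) = j"
proof -
  have "\<exists>!a. T a = j"
    using assms unfolding bij_betw_def inj_on_def by (metis UNIV_I imageE)
  then show ?thesis unfolding letter_def by (rule theI')
qed

lemma letter_bij_betw_iff:
  assumes "bij_betw T UNIV {1..n}" and "j \<in> {1..n}"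
  shows "T a = j \<longleftrightarrow> a = letter T j"
  using letter_bij_betw[OF assms] assms(1) unfolding bij_betw_def by (metis injD)

lemma bij_betw_below_last:
  assumes "bij_betw T UNIV {1..n}" and "1 \<le> n"
  shows "{a. T a \<le> n - 1} = - {letter T n}"
proof (rule set_eqI)
  fix a
  have "T a \<le> n" using assms(1) unfolding bij_betw_def by auto
  then show "a \<in> {a. T a \<le> n - 1} \<longleftrightarrow> a \<in> - {letter T n}"
    using letter_bij_betw_iff[OF assms(1), of n a] assms(2) by auto
qed

lemma irreducible2_last_letters_differ:
  fixes p :: "'a::finite perm2"
  assumes "CARD('a) \<ge> 2" and "is_perm2 p" and "irreducible2 p"
  shows "letter (fst p) CARD('a) \<noteq> letter (snd p) CARD('a)"
proof
  assume "letter (fst p) CARD('a) = letter (snd p) CARD('a)"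
  moreover have "1 \<le> CARD('a)" using assms(1) by simp
  ultimately have "{a. fst p a \<le> CARD('a) - 1} = {a. snd p a \<le> CARD('a) - 1}"
    using assms(2) bij_betw_below_last unfolding is_perm2_def by metis
  moreover have "1 \<le> CARD('a) - 1" "CARD('a) - 1 < CARD('a)" using assms(1) by auto
  ultimately show False using assms(3) unfolding irreducible2_def by blast
qed

lemma crossing_form_update_last:
  assumes "inj T" and last: "\<And>a. T a \<le> T w"
  shows "crossing_form T G (u(w := u w + c))
       = crossing_form T G u + c * (\<Sum>a | G w < G a. u a) + c"
proof -
  let ?v = "u(w := u w + c)"
  have "T a < T w" if "a \<noteq> w" for a
    using last[of a] \<open>inj T\<close> that by (metis injD order_le_neq_trans)
  then have summand: "of_bool (T a < T b \<and> G b < G a) * ?v a * ?v b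
      = of_bool (T a < T b \<and> G b < G a) * u a * u b
        + (if b = w then if G w < G a then c * u a else 0 else 0)" for a b
    using last[of b] by (cases "a = w") (auto simp: algebra_simps)
  have "(\<Sum>a\<in>UNIV. \<Sum>b\<in>UNIV. if b = w then if G w < G a then c * u a else 0 else (0::2))
      = c * (\<Sum>a | G w < G a. u a)"
    by (simp add: sum_distrib_left sum.inter_filter[symmetric])
  moreover have "(\<Sum>a\<in>UNIV. ?v a) = (\<Sum>a\<in>UNIV. u a + (if a = w then c else 0))"
    by (rule sum.cong) auto
  ultimately show ?thesis
    unfolding crossing_form_def summand by (simp add: sum.distrib algebra_simps)
qed

lemma crossing_form_rauzy_row:
  assumes "inj T" "inj G" and "G l = d" and "\<And>a. G a \<le> d" and "k < d"
  shows "crossing_form T (rauzy_row d k G) u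
       = crossing_form T G u + u l * (\<Sum>x | x \<noteq> l \<and> k < G x. u x)"
proof -
  let ?G' = "rauzy_row d k G"
  let ?after = "\<lambda>x. x \<noteq> l \<and> T l < T x \<and> k < G x"
  let ?before = "\<lambda>x. x \<noteq> l \<and> T x < T l \<and> k < G x"
  have G_less: "G a < d" if "a \<noteq> l" for a
    using assms(2-4) that by (metis injD order_le_neq_trans)
  have "(of_bool (T a < T b \<and> ?G' b < ?G' a) :: 2)
      = of_bool (T a < T b \<and> G b < G a)
        + (if a = l then of_bool (?after b) else 0) + (if b = l then of_bool (?before a) else 0)" for a b
    using G_less[of a] G_less[of b] \<open>k < d\<close> \<open>G l = d\<close> injD[OF \<open>inj G\<close>, of a b] injD[OF \<open>inj T\<close>, of a b]
    unfolding rauzy_row_def by auto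
  then have summand: "of_bool (T a < T b \<and> ?G' b < ?G' a) * u a * u b
      = of_bool (T a < T b \<and> G b < G a) * u a * u b
        + (if a = l then u l * (of_bool (?after b) * u b) else 0)
        + (if b = l then u l * (of_bool (?before a) * u a) else 0)" for a b
    by (simp add: algebra_simps)
  have "(\<Sum>a\<in>UNIV. \<Sum>b\<in>UNIV. if a = l then u l * (of_bool (?after b) * u b) else 0)
      = u l * (\<Sum>x | ?after x. u x)"
    by (subst sum.swap) (simp add: sum_distrib_left[symmetric])
  moreover have "(\<Sum>a\<in>UNIV. \<Sum>b\<in>UNIV. if b = l then u l * (of_bool (?before a) * u a) else 0)
      = u l * (\<Sum>x | ?before x. u x)"
    by (simp add: sum_distrib_left[symmetric])
  moreover have "(\<Sum>x | ?after x. u x) + (\<Sum>x | ?before x. u x) = (\<Sum>x | x \<noteq> l \<and> k < G x. u x)"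
  proof -
    have "{x. x \<noteq> l \<and> k < G x} = {x. ?after x} \<union> {x. ?before x}"
      using injD[OF \<open>inj T\<close>, of _ l] by (auto simp: nat_neq_iff) (metis nat_neq_iff)
    then show ?thesis
      by (simp add: sum.union_disjoint disjoint_iff)
  qed
  ultimately show ?thesis
    unfolding crossing_form_def summand by (simp add: sum.distrib algebra_simps flip: distrib_left)
qed

lemma crossing_form_rauzy_step:
  fixes T G :: "'a::finite \<Rightarrow> nat"
  assumes bT: "bij_betw T UNIV {1..CARD('a)}" and bG: "bij_betw G UNIV {1..CARD('a)}"
    and w: "w = letter T CARD('a)" and l: "l = letter G CARD('a)" and "w \<noteq> l"
  shows "crossing_form T (rauzy_row CARD('a) (G w) G) u = crossing_form T G (u(w := u w + u l))"
proof -
  let ?d = "CARD('a)"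
  have d: "?d \<in> {1..?d}" by (simp add: Suc_leI)
  have "inj T" "inj G" and T_le: "\<And>a. T a \<le> ?d" and G_le: "\<And>a. G a \<le> ?d"
    using bT bG unfolding bij_betw_def by auto
  have "T w = ?d" "G l = ?d"
    using letter_bij_betw[OF bT d] letter_bij_betw[OF bG d] w l by auto
  have "G w < ?d"
    using letter_bij_betw_iff[OF bG d, of w] G_le[of w] \<open>w \<noteq> l\<close> l
    by (metis le_neq_implies_less)
  have "{a. G w < G a} = insert l {x. x \<noteq> l \<and> G w < G x}"
    using \<open>G l = ?d\<close> \<open>G w < ?d\<close> by auto
  moreover note crossing_form_rauzy_row[OF \<open>inj T\<close> \<open>inj G\<close> \<open>G l = ?d\<close> G_le \<open>G w < ?d\<close>, of u]
  moreover note crossing_form_update_last[OF \<open>inj T\<close>, of w G u "u l"]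
  ultimately show ?thesis using T_le \<open>T w = ?d\<close> by (simp add: distrib_left)
qed

theorem lemma2p11:
  fixes p p' :: "'a::finite perm2" and w l :: 'a
  assumes "CARD('a) \<ge> 3"
    and "is_perm2 p" and "irreducible2 p"
    and "rauzy_arrow p p' w l"
  shows "\<forall>u :: 'a \<Rightarrow> 2. Qform p' u = Qform p (vecmat u (mod2_mat (Bmat w l)))"
proof
  fix u :: "'a \<Rightarrow> 2"
  have bT: "bij_betw (fst p) UNIV {1..CARD('a)}" and bG: "bij_betw (snd p) UNIV {1..CARD('a)}"
    using assms(2) unfolding is_perm2_def by auto
  have "letter (fst p) CARD('a) \<noteq> letter (snd p) CARD('a)"
    using irreducible2_last_letters_differ[OF _ assms(2,3)] assms(1) by simp
  with assms(4) show "Qform p' u = Qform p (vecmat u (mod2_mat (Bmat w l)))"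
    unfolding rauzy_arrow_def
  proof (elim disjE conjE)
    assume "p' = rauzy_top p" "w = letter (fst p) CARD('a)" "l = letter (snd p) CARD('a)"
    then show ?thesis
      using crossing_form_rauzy_step[OF bT bG] \<open>letter _ _ \<noteq> _\<close>
      by (simp add: rauzy_top_def Qform_eq_crossing_form vecmat_Bmat)
  next
    assume "p' = rauzy_bot p" "w = letter (snd p) CARD('a)" "l = letter (fst p) CARD('a)"
    then show ?thesis
      using crossing_form_rauzy_step[OF bG bT] \<open>letter _ _ \<noteq> _\<close>
      by (simp add: rauzy_bot_def Qform_eq_crossing_form vecmat_Bmat crossing_form_swap[of _ "snd p"])
  qed
qed

end
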